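(* Let $G$ be a graph on $n\ge1$ vertices. Then $D(G,k)$, as a function of the positive integer $k$, is given by a polynomial in $k$ (with rational coefficients) of degree $n$ and with constant term $0$. If $G$ has no non-trivial automorphisms, then $D(G,k)=k^n$; otherwise, the sum of the coefficients of this polynomial is $0$.
   Context: A $k$-labeling of $G$ is a map $\phi:V(G)\to\{1,\dots,k\}$; an automorphism $\pi$ preserves $\phi$ if $\phi(\pi(v))=\phi(v)$ for all $v$; $\phi$ is distinguishing if only the identity preserves it. Two distinguishing $k$-labelings $\phi,\phi'$ are equivalent if some automorphism $\pi$ satisfies $\phi'(\pi(v))=\phi(v)$ for all $v$; $D(G,k)$ is the number of equivalence classes of distinguishing $k$-labelings of $G$. *)

theory Defs
  imports "HOL-Combinatorics.Permutations" "HOL-Library.FuncSet"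
          "HOL-Computational_Algebra.Polynomial"
begin

definition simple_graph :: "'a set \<Rightarrow> ('a \<Rightarrow> 'a \<Rightarrow> bool) \<Rightarrow> bool" where
  "simple_graph V E \<longleftrightarrow> finite V \<and> (\<forall>u v. E u v \<longrightarrow> u \<in> V \<and> v \<in> V)
     \<and> (\<forall>u v. E u v \<longrightarrow> E v u) \<and> (\<forall>v. \<not> E v v)"

definition graph_aut :: "'a set \<Rightarrow> ('a \<Rightarrow> 'a \<Rightarrow> bool) \<Rightarrow> ('a \<Rightarrow> 'a) set" where
  "graph_aut V E = {\<pi>. \<pi> permutes V \<and> (\<forall>u\<in>V. \<forall>v\<in>V. E u v \<longleftrightarrow> E (\<pi> u) (\<pi> v))}"

definition labelings :: "'a set \<Rightarrow> nat \<Rightarrow> ('a \<Rightarrow> nat) set" where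
  "labelings V k = V \<rightarrow>\<^sub>E {1..k}"

definition preserves :: "'a set \<Rightarrow> ('a \<Rightarrow> 'a) \<Rightarrow> ('a \<Rightarrow> nat) \<Rightarrow> bool" where
  "preserves V \<pi> \<phi> \<longleftrightarrow> (\<forall>v\<in>V. \<phi> (\<pi> v) = \<phi> v)"

definition distinguishing :: "'a set \<Rightarrow> ('a \<Rightarrow> 'a \<Rightarrow> bool) \<Rightarrow> ('a \<Rightarrow> nat) \<Rightarrow> bool" where
  "distinguishing V E \<phi> \<longleftrightarrow> (\<forall>\<pi>\<in>graph_aut V E. preserves V \<pi> \<phi> \<longrightarrow> \<pi> = id)"

definition dist_labelings :: "'a set \<Rightarrow> ('a \<Rightarrow> 'a \<Rightarrow> bool) \<Rightarrow> nat \<Rightarrow> ('a \<Rightarrow> nat) set" where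
  "dist_labelings V E k = {\<phi> \<in> labelings V k. distinguishing V E \<phi>}"

definition label_equiv :: "'a set \<Rightarrow> ('a \<Rightarrow> 'a \<Rightarrow> bool) \<Rightarrow> nat \<Rightarrow> (('a \<Rightarrow> nat) \<times> ('a \<Rightarrow> nat)) set" where
  "label_equiv V E k = {(\<phi>, \<phi>'). \<phi> \<in> dist_labelings V E k \<and> \<phi>' \<in> dist_labelings V E k \<and>
      (\<exists>\<pi>\<in>graph_aut V E. \<forall>v\<in>V. \<phi>' (\<pi> v) = \<phi> v)}"

definition D :: "'a set \<Rightarrow> ('a \<Rightarrow> 'a \<Rightarrow> bool) \<Rightarrow> nat \<Rightarrow> nat" where
  "D V E k = card (dist_labelings V E k // label_equiv V E k)"

end

theory Submission
  imports Defs
begin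

(* The automorphism group acts freely on the distinguishing labelings: the stabiliser of a
   relabeled labeling is conjugate to the stabiliser of the original one. Hence every
   equivalence class has |Aut G| elements, and D(G,k) |Aut G| is the number of
   distinguishing k-labelings. By inclusion-exclusion over the sets B of non-identity
   automorphisms, that number is the sum of (-1)^|B| k^c(B), where k^c(B) counts the
   labelings fixed by every member of B and c(B) is the number of orbits of the group
   generated by B. Since c({}) = n while 1 <= c(B) < n for nonempty B, dividing by |Aut G|
   yields a polynomial of degree n without constant term. Its coefficient sum is its value at
   1, that is D(G,1), which vanishes as soon as there is a non-trivial automorphism, because
   such an automorphism preserves the unique 1-labeling. *)

lemma quotient_eq_image: "A // r = (\<lambda>x. r `` {x}) ` A"
  by (simp add: quotient_def UNION_singleton_eq_range)

lemma card_eq_mult_card_quotient: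
  assumes "finite A" "equiv A r" "\<And>X. X \<in> A // r \<Longrightarrow> card X = m"
  shows "card A = m * card (A // r)"
proof -
  have "m * card (A // r) = card (\<Union>(A // r))"
  proof (rule card_partition)
    show "finite (A // r)"
      using assms(1,2) by (simp add: finite_quotient equiv_type)
    show "finite (\<Union>(A // r))"
      using assms(1,2) by (simp add: Union_quotient)
  qed (use assms(3) quotient_disj[OF assms(2)] in blast)+
  then show ?thesis
    by (simp add: Union_quotient[OF assms(2)])
qed

lemma image_equiv_class:
  assumes "equiv A r" "\<forall>(u, v)\<in>r. f u = f v" "a \<in> A"
  shows "f ` (r `` {a}) = {f a}"
proof -
  have "f x = f a" if "x \<in> r `` {a}" for x
    using assms(2) that by auto
  then show ?thesis
    using equiv_class_self[OF assms(1,3)] by blast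
qed

lemma class_constant_functions_eq_image:
  assumes r: "equiv A r"
  shows "{f \<in> A \<rightarrow>\<^sub>E C. \<forall>(u, v)\<in>r. f u = f v} = (\<lambda>g. \<lambda>x\<in>A. g (r `` {x})) ` (A // r \<rightarrow>\<^sub>E C)"
proof (intro equalityI subsetI)
  fix f assume "f \<in> {f \<in> A \<rightarrow>\<^sub>E C. \<forall>(u, v)\<in>r. f u = f v}"
  then have f: "f \<in> A \<rightarrow>\<^sub>E C" and const: "\<forall>(u, v)\<in>r. f u = f v"
    by simp_all
  define g where "g = (\<lambda>X\<in>A // r. the_elem (f ` X))"
  have g_class: "g (r `` {a}) = f a" if "a \<in> A" for a
    using that by (simp add: g_def image_equiv_class[OF r const] quotientI)
  have "g \<in> A // r \<rightarrow>\<^sub>E C"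
  proof (rule PiE_I)
    fix X assume "X \<in> A // r"
    then obtain a where a: "a \<in> A" and X: "X = r `` {a}" by (rule quotientE)
    show "g X \<in> C"
      using g_class[OF a] PiE_mem[OF f a] by (simp add: X)
  qed (simp add: g_def)
  moreover have "(\<lambda>x\<in>A. g (r `` {x})) = f"
  proof
    fix x show "(\<lambda>x\<in>A. g (r `` {x})) x = f x"
      using g_class by (cases "x \<in> A") (simp_all add: PiE_arb[OF f])
  qed
  ultimately show "f \<in> (\<lambda>g. \<lambda>x\<in>A. g (r `` {x})) ` (A // r \<rightarrow>\<^sub>E C)"
    by blast
next
  fix f assume "f \<in> (\<lambda>g. \<lambda>x\<in>A. g (r `` {x})) ` (A // r \<rightarrow>\<^sub>E C)"
  then obtain g where g: "g \<in> A // r \<rightarrow>\<^sub>E C" and f: "f = (\<lambda>x\<in>A. g (r `` {x}))"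
    by blast
  have "f \<in> A \<rightarrow>\<^sub>E C"
    using g by (auto simp: f intro: quotientI)
  moreover have "f u = f v" if "(u, v) \<in> r" for u v
  proof -
    have "u \<in> A" "v \<in> A"
      using that equiv_type[OF r] by auto
    then show ?thesis
      using equiv_class_eq[OF r that] by (simp add: f)
  qed
  ultimately show "f \<in> {f \<in> A \<rightarrow>\<^sub>E C. \<forall>(u, v)\<in>r. f u = f v}"
    by auto
qed

lemma inj_on_lift_quotient:
  "inj_on (\<lambda>g. \<lambda>x\<in>A. g (r `` {x})) (A // r \<rightarrow>\<^sub>E C)"
proof (rule inj_onI)
  fix g1 g2 assume g: "g1 \<in> A // r \<rightarrow>\<^sub>E C" "g2 \<in> A // r \<rightarrow>\<^sub>E C"
    and eq: "(\<lambda>x\<in>A. g1 (r `` {x})) = (\<lambda>x\<in>A. g2 (r `` {x}))"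
  have "g1 (r `` {a}) = g2 (r `` {a})" if "a \<in> A" for a
    using fun_cong[OF eq, of a] that by simp
  then show "g1 = g2"
    using g by (auto intro: PiE_ext elim!: quotientE)
qed

lemma card_class_constant_functions:
  assumes "finite A" "equiv A r"
  shows "card {f \<in> A \<rightarrow>\<^sub>E C. \<forall>(u, v)\<in>r. f u = f v} = card C ^ card (A // r)"
proof -
  have "finite (A // r)"
    using assms by (simp add: finite_quotient equiv_type)
  then show ?thesis
    by (simp add: class_constant_functions_eq_image[OF assms(2)] card_image inj_on_lift_quotient
                  card_PiE)
qed

lemma int_card_sieve:
  assumes "finite U" "finite A"
  shows "int (card {x \<in> U. \<forall>a\<in>A. \<not> P a x}) =
         (\<Sum>B\<in>Pow A. (-1) ^ card B * int (card {x \<in> U. \<forall>a\<in>B. P a x}))"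
proof -
  define f where "f S = int (card (U \<inter> S))" for S
  define X where "X a = {x. P a x}" for a
  have f_X: "f (\<Inter>(X ` B)) = int (card {x \<in> U. \<forall>a\<in>B. P a x})" for B
    unfolding f_def X_def by (rule arg_cong[where f = "\<lambda>S. int (card S)"]) blast
  have "f (\<Union>(X ` A)) = (\<Sum>B | B \<subseteq> A \<and> B \<noteq> {}. (-1) ^ (card B + 1) * f (\<Inter>(X ` B)))"
  proof (rule Incl_Excl_UN[OF _ assms(2)])
    show "f (S \<union> T) = f S + f T" if "disjnt S T" for S T
    proof -
      have "card (U \<inter> S \<union> U \<inter> T) = card (U \<inter> S) + card (U \<inter> T)"
        by (rule card_Un_disjoint) (use that assms(1) in \<open>auto simp: disjnt_def\<close>)
      then show ?thesis
        by (simp add: f_def Int_Un_distrib)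
    qed
  qed
  also have "\<dots> = - (\<Sum>B\<in>Pow A - {{}}. (-1) ^ card B * f (\<Inter>(X ` B)))"
    by (simp add: sum_negf Pow_def set_diff_eq conj_commute)
  finally have union: "f (\<Union>(X ` A)) = - (\<Sum>B\<in>Pow A - {{}}. (-1) ^ card B * f (\<Inter>(X ` B)))" .
  have "{x \<in> U. \<forall>a\<in>A. \<not> P a x} = U - U \<inter> \<Union>(X ` A)"
    by (auto simp: X_def)
  then have "int (card {x \<in> U. \<forall>a\<in>A. \<not> P a x}) = int (card U) - f (\<Union>(X ` A))"
    using assms(1) by (simp add: f_def card_Diff_subset card_mono)
  also have "\<dots> = (\<Sum>B\<in>Pow A. (-1) ^ card B * f (\<Inter>(X ` B)))"
    using assms(2) f_X[of "{}"] by (simp add: union sum.remove[of "Pow A" "{}"])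
  finally show ?thesis
    by (simp add: f_X)
qed

lemma degree_sum_monom_eq:
  fixes a :: "'b \<Rightarrow> 'c::comm_monoid_add"
  assumes "finite S" "x \<in> S" "a x \<noteq> 0" "\<And>y. y \<in> S \<Longrightarrow> y \<noteq> x \<Longrightarrow> e y < e x"
  shows "degree (\<Sum>y\<in>S. monom (a y) (e y)) = e x"
proof -
  let ?p = "\<Sum>y\<in>S. monom (a y) (e y)"
  have coeff_p: "coeff ?p i = (\<Sum>y\<in>S. if e y = i then a y else 0)" for i
    by (simp add: coeff_sum)
  have "coeff ?p (e x) = (\<Sum>y\<in>S. if y = x then a y else 0)"
    unfolding coeff_p by (intro sum.cong refl) (auto dest: assms(4))
  also have "\<dots> = a x"
    using assms(1,2) by simp
  finally have "coeff ?p (e x) \<noteq> 0"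
    using assms(3) by simp
  moreover have "coeff ?p i = 0" if "e x < i" for i
    unfolding coeff_p using assms(4) that by (intro sum.neutral) (metis less_trans less_irrefl)
  ultimately show ?thesis
    by (intro antisym degree_le le_degree) auto
qed

section \<open>Automorphisms acting on labelings\<close>

lemma id_in_graph_aut: "id \<in> graph_aut V E"
  by (simp add: graph_aut_def)

lemma graph_aut_permutes: "\<pi> \<in> graph_aut V E \<Longrightarrow> \<pi> permutes V"
  by (simp add: graph_aut_def)

lemma graph_aut_image: "\<pi> \<in> graph_aut V E \<Longrightarrow> \<pi> ` V = V"
  by (simp add: graph_aut_permutes permutes_image)

lemma graph_aut_compose:
  "\<sigma> \<in> graph_aut V E \<Longrightarrow> \<tau> \<in> graph_aut V E \<Longrightarrow> \<sigma> \<circ> \<tau> \<in> graph_aut V E"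
  unfolding graph_aut_def by (auto intro: permutes_compose) (metis permutes_in_image)+

lemma graph_aut_inv:
  assumes \<sigma>: "\<sigma> \<in> graph_aut V E"
  shows "inv \<sigma> \<in> graph_aut V E"
proof -
  have p: "\<sigma> permutes V" using \<sigma> by (simp add: graph_aut_def)
  have "E (\<sigma> (inv \<sigma> u)) (\<sigma> (inv \<sigma> v)) = E (inv \<sigma> u) (inv \<sigma> v)" if "u \<in> V" "v \<in> V" for u v
    using \<sigma> that permutes_in_image[OF permutes_inv[OF p]] by (simp add: graph_aut_def)
  then show ?thesis
    using p by (simp add: graph_aut_def permutes_inv permutes_inverses(1))
qed

lemma finite_graph_aut: "finite V \<Longrightarrow> finite (graph_aut V E)"
  by (rule finite_subset[OF _ finite_permutations]) (auto simp: graph_aut_def)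

lemma card_graph_aut_pos: "finite V \<Longrightarrow> 0 < card (graph_aut V E)"
  using finite_graph_aut id_in_graph_aut card_gt_0_iff by blast

lemma graph_aut_moves_vertex:
  assumes "\<pi> \<in> graph_aut V E" "\<pi> \<noteq> id"
  obtains w where "w \<in> V" "\<pi> w \<in> V" "\<pi> w \<noteq> w"
proof -
  obtain w where w: "\<pi> w \<noteq> w"
    using assms(2) by (auto simp: fun_eq_iff)
  then have "w \<in> V"
    using permutes_not_in[OF graph_aut_permutes[OF assms(1)]] by blast
  with w show ?thesis
    using that graph_aut_image[OF assms(1)] by blast
qed

definition relabel :: "'a set \<Rightarrow> ('a \<Rightarrow> 'a) \<Rightarrow> ('a \<Rightarrow> nat) \<Rightarrow> 'a \<Rightarrow> nat" where
  "relabel V \<pi> \<phi> = (\<lambda>v\<in>V. \<phi> (inv \<pi> v))"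

lemma relabel_apply: "\<pi> permutes V \<Longrightarrow> v \<in> V \<Longrightarrow> relabel V \<pi> \<phi> (\<pi> v) = \<phi> v"
  by (simp add: relabel_def permutes_in_image permutes_inverses(2))

lemma relabel_in_labelings:
  "\<pi> permutes V \<Longrightarrow> \<phi> \<in> labelings V k \<Longrightarrow> relabel V \<pi> \<phi> \<in> labelings V k"
  by (auto simp: relabel_def labelings_def permutes_in_image[OF permutes_inv])

lemma relabel_id: "\<phi> \<in> labelings V k \<Longrightarrow> relabel V id \<phi> = \<phi>"
  by (simp add: relabel_def labelings_def)

lemma relabel_relabel:
  assumes "\<sigma> permutes V" "\<pi> permutes V"
  shows "relabel V \<sigma> (relabel V \<pi> \<phi>) = relabel V (\<sigma> \<circ> \<pi>) \<phi>"
  using assms by (auto simp: relabel_def o_inv_distrib permutes_bij permutes_in_image[OF permutes_inv])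

lemma relabel_unique:
  assumes \<pi>: "\<pi> permutes V" and "\<phi>' \<in> labelings V k" and "\<forall>v\<in>V. \<phi>' (\<pi> v) = \<phi> v"
  shows "\<phi>' = relabel V \<pi> \<phi>"
proof
  fix v show "\<phi>' v = relabel V \<pi> \<phi> v"
  proof (cases "v \<in> V")
    case True
    then have "\<phi>' (\<pi> (inv \<pi> v)) = \<phi> (inv \<pi> v)"
      using assms(3) True permutes_in_image[OF permutes_inv[OF \<pi>]] by blast
    with True show ?thesis
      by (simp add: relabel_def permutes_inverses(1)[OF \<pi>])
  next
    case False
    then show ?thesis
      using PiE_arb[OF assms(2)[unfolded labelings_def]] by (simp add: relabel_def)
  qed
qed

lemma preserves_relabel:
  assumes \<pi>: "\<pi> permutes V" and \<sigma>: "\<sigma> permutes V"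
  shows "preserves V \<sigma> (relabel V \<pi> \<phi>) \<longleftrightarrow> preserves V (inv \<pi> \<circ> \<sigma> \<circ> \<pi>) \<phi>"
proof -
  have "preserves V \<sigma> (relabel V \<pi> \<phi>) \<longleftrightarrow>
        (\<forall>w\<in>\<pi> ` V. relabel V \<pi> \<phi> (\<sigma> w) = relabel V \<pi> \<phi> w)"
    by (simp only: preserves_def permutes_image[OF \<pi>])
  also have "\<dots> \<longleftrightarrow> preserves V (inv \<pi> \<circ> \<sigma> \<circ> \<pi>) \<phi>"
    using \<pi> \<sigma> by (simp add: preserves_def relabel_def permutes_in_image permutes_inverses(2))
  finally show ?thesis .
qed

lemma distinguishing_relabel:
  assumes \<pi>: "\<pi> \<in> graph_aut V E" and \<phi>: "distinguishing V E \<phi>"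
  shows "distinguishing V E (relabel V \<pi> \<phi>)"
  unfolding distinguishing_def
proof (intro ballI impI)
  fix \<sigma> assume \<sigma>: "\<sigma> \<in> graph_aut V E" and "preserves V \<sigma> (relabel V \<pi> \<phi>)"
  then have "preserves V (inv \<pi> \<circ> \<sigma> \<circ> \<pi>) \<phi>"
    using \<pi> by (simp add: preserves_relabel graph_aut_permutes)
  moreover have "inv \<pi> \<circ> \<sigma> \<circ> \<pi> \<in> graph_aut V E"
    using \<pi> \<sigma> by (simp add: graph_aut_compose graph_aut_inv)
  ultimately have conj_id: "inv \<pi> \<circ> \<sigma> \<circ> \<pi> = id"
    using \<phi> by (simp add: distinguishing_def)
  have "\<sigma> = \<pi> \<circ> (inv \<pi> \<circ> \<sigma> \<circ> \<pi>) \<circ> inv \<pi>"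
    using graph_aut_permutes[OF \<pi>] by (simp add: fun_eq_iff permutes_inverses(1))
  also have "\<dots> = id"
    using permutes_inv_o(1)[OF graph_aut_permutes[OF \<pi>]] by (simp add: conj_id)
  finally show "\<sigma> = id" .
qed

lemma inj_on_relabel:
  assumes \<phi>: "distinguishing V E \<phi>"
  shows "inj_on (\<lambda>\<pi>. relabel V \<pi> \<phi>) (graph_aut V E)"
proof (rule inj_onI)
  fix \<pi>1 \<pi>2 assume \<pi>1: "\<pi>1 \<in> graph_aut V E" and \<pi>2: "\<pi>2 \<in> graph_aut V E"
    and eq: "relabel V \<pi>1 \<phi> = relabel V \<pi>2 \<phi>"
  have "preserves V (inv \<pi>1 \<circ> \<pi>2) \<phi>"
    unfolding preserves_def
  proof
    fix v assume v: "v \<in> V"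
    then have "\<phi> (inv \<pi>1 (\<pi>2 v)) = relabel V \<pi>1 \<phi> (\<pi>2 v)"
      using \<pi>2 by (simp add: relabel_def permutes_in_image graph_aut_permutes)
    also have "\<dots> = \<phi> v"
      using v \<pi>2 by (simp add: eq relabel_apply graph_aut_permutes)
    finally show "\<phi> ((inv \<pi>1 \<circ> \<pi>2) v) = \<phi> v" by simp
  qed
  then have quot_id: "inv \<pi>1 \<circ> \<pi>2 = id"
    using \<phi> \<pi>1 \<pi>2 by (simp add: distinguishing_def graph_aut_compose graph_aut_inv)
  have "\<pi>2 = \<pi>1 \<circ> (inv \<pi>1 \<circ> \<pi>2)"
    using graph_aut_permutes[OF \<pi>1] by (simp add: fun_eq_iff permutes_inverses(1))
  then show "\<pi>1 = \<pi>2"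
    by (simp add: quot_id)
qed

lemma label_equiv_iff:
  "(\<phi>, \<phi>') \<in> label_equiv V E k \<longleftrightarrow>
     \<phi> \<in> dist_labelings V E k \<and> (\<exists>\<pi>\<in>graph_aut V E. \<phi>' = relabel V \<pi> \<phi>)"
proof
  assume "(\<phi>, \<phi>') \<in> label_equiv V E k"
  then obtain \<pi> where \<phi>: "\<phi> \<in> dist_labelings V E k" and \<phi>': "\<phi>' \<in> labelings V k"
    and \<pi>: "\<pi> \<in> graph_aut V E" and "\<forall>v\<in>V. \<phi>' (\<pi> v) = \<phi> v"
    by (auto simp: label_equiv_def dist_labelings_def)
  then have "\<phi>' = relabel V \<pi> \<phi>"
    using relabel_unique graph_aut_permutes by blast
  with \<phi> \<pi> show "\<phi> \<in> dist_labelings V E k \<and> (\<exists>\<pi>\<in>graph_aut V E. \<phi>' = relabel V \<pi> \<phi>)"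
    by blast
next
  assume "\<phi> \<in> dist_labelings V E k \<and> (\<exists>\<pi>\<in>graph_aut V E. \<phi>' = relabel V \<pi> \<phi>)"
  then obtain \<pi> where \<phi>: "\<phi> \<in> dist_labelings V E k" and \<pi>: "\<pi> \<in> graph_aut V E"
    and \<phi>': "\<phi>' = relabel V \<pi> \<phi>"
    by blast
  have "\<phi>' \<in> dist_labelings V E k"
    using \<phi> \<pi> by (simp add: \<phi>' dist_labelings_def relabel_in_labelings distinguishing_relabel
                             graph_aut_permutes)
  moreover have "\<forall>v\<in>V. \<phi>' (\<pi> v) = \<phi> v"
    using \<pi> by (simp add: \<phi>' relabel_apply graph_aut_permutes)
  ultimately show "(\<phi>, \<phi>') \<in> label_equiv V E k"
    using \<phi> \<pi> by (auto simp: label_equiv_def)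
qed

lemma equiv_label_equiv: "equiv (dist_labelings V E k) (label_equiv V E k)"
proof (rule equivI)
  show "label_equiv V E k \<subseteq> dist_labelings V E k \<times> dist_labelings V E k"
    by (auto simp: label_equiv_def)
  show "refl_on (dist_labelings V E k) (label_equiv V E k)"
  proof (rule refl_onI)
    fix \<phi> assume \<phi>: "\<phi> \<in> dist_labelings V E k"
    then have "\<phi> \<in> labelings V k"
      by (simp add: dist_labelings_def)
    then have "\<phi> = relabel V id \<phi>"
      by (simp add: relabel_id)
    with \<phi> show "(\<phi>, \<phi>) \<in> label_equiv V E k"
      using id_in_graph_aut label_equiv_iff by blast
  qed
  show "sym (label_equiv V E k)"
  proof (rule symI)
    fix \<phi> \<phi>' assume related: "(\<phi>, \<phi>') \<in> label_equiv V E k"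
    then obtain \<pi> where \<pi>: "\<pi> \<in> graph_aut V E" and \<phi>': "\<phi>' = relabel V \<pi> \<phi>"
      by (auto simp: label_equiv_iff)
    have dist: "\<phi> \<in> dist_labelings V E k" "\<phi>' \<in> dist_labelings V E k"
      using related by (simp_all add: label_equiv_def)
    have "relabel V (inv \<pi>) \<phi>' = \<phi>"
      using graph_aut_permutes[OF \<pi>] dist relabel_id[of \<phi> V k]
      by (simp add: \<phi>' relabel_relabel permutes_inv permutes_inv_o(2) dist_labelings_def)
    then show "(\<phi>', \<phi>) \<in> label_equiv V E k"
      using dist(2) graph_aut_inv[OF \<pi>] label_equiv_iff by metis
  qed
  show "trans (label_equiv V E k)"
  proof (rule transI)
    fix \<phi> \<phi>' \<phi>'' assume "(\<phi>, \<phi>') \<in> label_equiv V E k" "(\<phi>', \<phi>'') \<in> label_equiv V E k"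
    then obtain \<pi> \<sigma> where \<pi>: "\<pi> \<in> graph_aut V E" and \<sigma>: "\<sigma> \<in> graph_aut V E"
      and \<phi>: "\<phi> \<in> dist_labelings V E k" and "\<phi>'' = relabel V \<sigma> (relabel V \<pi> \<phi>)"
      by (auto simp: label_equiv_iff)
    then have "\<phi>'' = relabel V (\<sigma> \<circ> \<pi>) \<phi>"
      by (simp add: relabel_relabel graph_aut_permutes)
    then show "(\<phi>, \<phi>'') \<in> label_equiv V E k"
      using \<phi> graph_aut_compose[OF \<sigma> \<pi>] label_equiv_iff by blast
  qed
qed

lemma label_equiv_class:
  "\<phi> \<in> dist_labelings V E k \<Longrightarrow>
     label_equiv V E k `` {\<phi>} = (\<lambda>\<pi>. relabel V \<pi> \<phi>) ` graph_aut V E"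
  by (auto simp: label_equiv_iff)

lemma card_label_equiv_class:
  "\<phi> \<in> dist_labelings V E k \<Longrightarrow> card (label_equiv V E k `` {\<phi>}) = card (graph_aut V E)"
  by (simp add: label_equiv_class card_image inj_on_relabel dist_labelings_def)

lemma card_dist_labelings_eq:
  assumes "finite V"
  shows "card (dist_labelings V E k) = card (graph_aut V E) * D V E k"
  unfolding D_def
proof (rule card_eq_mult_card_quotient[OF _ equiv_label_equiv])
  show "finite (dist_labelings V E k)"
    using assms by (auto simp: dist_labelings_def labelings_def finite_PiE)
qed (auto elim: quotientE simp: card_label_equiv_class)

section \<open>Orbits and invariant labelings\<close>

(* Two vertices are related iff no labeling invariant under B separates them; when the
   members of B map V into itself, the classes are the orbits of the group generated by B. *)
definition orbit_rel :: "'a set \<Rightarrow> ('a \<Rightarrow> 'a) set \<Rightarrow> ('a \<times> 'a) set" where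
  "orbit_rel V B = {(u, v). u \<in> V \<and> v \<in> V \<and>
     (\<forall>\<phi>::'a \<Rightarrow> nat. (\<forall>\<pi>\<in>B. preserves V \<pi> \<phi>) \<longrightarrow> \<phi> u = \<phi> v)}"

definition num_orbits :: "'a set \<Rightarrow> ('a \<Rightarrow> 'a) set \<Rightarrow> nat" where
  "num_orbits V B = card (V // orbit_rel V B)"

lemma equiv_orbit_rel: "equiv V (orbit_rel V B)"
  by (rule equivI) (auto simp: orbit_rel_def refl_on_def sym_def trans_def)

lemma orbit_rel_step: "\<pi> \<in> B \<Longrightarrow> w \<in> V \<Longrightarrow> \<pi> w \<in> V \<Longrightarrow> (w, \<pi> w) \<in> orbit_rel V B"
  by (auto simp: orbit_rel_def preserves_def)

lemma invariant_iff_constant_on_orbits: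
  assumes "\<And>\<pi>. \<pi> \<in> B \<Longrightarrow> \<pi> ` V \<subseteq> V"
  shows "(\<forall>\<pi>\<in>B. preserves V \<pi> \<phi>) \<longleftrightarrow> (\<forall>(u, v)\<in>orbit_rel V B. \<phi> u = \<phi> v)"
proof
  show "\<forall>(u, v)\<in>orbit_rel V B. \<phi> u = \<phi> v" if "\<forall>\<pi>\<in>B. preserves V \<pi> \<phi>"
    using that by (auto simp: orbit_rel_def)
  show "\<forall>\<pi>\<in>B. preserves V \<pi> \<phi>" if const: "\<forall>(u, v)\<in>orbit_rel V B. \<phi> u = \<phi> v"
    unfolding preserves_def
  proof (intro ballI)
    fix \<pi> w assume "\<pi> \<in> B" "w \<in> V"
    then have "(w, \<pi> w) \<in> orbit_rel V B"
      using assms by (blast intro: orbit_rel_step)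
    then show "\<phi> (\<pi> w) = \<phi> w"
      using const by fastforce
  qed
qed

lemma card_invariant_labelings:
  assumes "finite V" and "\<And>\<pi>. \<pi> \<in> B \<Longrightarrow> \<pi> ` V \<subseteq> V"
  shows "card {\<phi> \<in> labelings V k. \<forall>\<pi>\<in>B. preserves V \<pi> \<phi>} = k ^ num_orbits V B"
  using card_class_constant_functions[OF assms(1) equiv_orbit_rel, of "{1..k}" B]
  by (simp add: labelings_def invariant_iff_constant_on_orbits[OF assms(2)] num_orbits_def)

lemma num_orbits_le: "finite V \<Longrightarrow> num_orbits V B \<le> card V"
  by (simp add: num_orbits_def quotient_eq_image card_image_le)

lemma num_orbits_pos: "finite V \<Longrightarrow> V \<noteq> {} \<Longrightarrow> 0 < num_orbits V B"
  by (simp add: num_orbits_def quotient_eq_image card_gt_0_iff)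

lemma num_orbits_eq_card_iff:
  assumes "finite V"
  shows "num_orbits V B = card V \<longleftrightarrow> orbit_rel V B \<subseteq> Id"
proof -
  have "num_orbits V B = card V \<longleftrightarrow> inj_on (\<lambda>v. orbit_rel V B `` {v}) V"
    using assms by (simp add: num_orbits_def quotient_eq_image inj_on_iff_eq_card)
  also have "\<dots> \<longleftrightarrow> (\<forall>u\<in>V. \<forall>v\<in>V. (u, v) \<in> orbit_rel V B \<longrightarrow> u = v)"
    by (simp add: inj_on_def eq_equiv_class_iff[OF equiv_orbit_rel])
  also have "\<dots> \<longleftrightarrow> orbit_rel V B \<subseteq> Id"
    by (auto simp: orbit_rel_def)
  finally show ?thesis .
qed

lemma num_orbits_empty: "finite V \<Longrightarrow> num_orbits V {} = card V"
proof (subst num_orbits_eq_card_iff, safe)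
  fix u v assume "(u, v) \<in> orbit_rel V {}"
  then have "\<forall>\<phi> :: 'a \<Rightarrow> nat. \<phi> u = \<phi> v"
    by (simp add: orbit_rel_def)
  from this[rule_format, of "\<lambda>x. if x = u then 1 else 0"] show "u = v"
    by (simp split: if_splits)
qed

lemma num_orbits_less:
  assumes "finite V" "\<pi> \<in> B" "w \<in> V" "\<pi> w \<in> V" "\<pi> w \<noteq> w"
  shows "num_orbits V B < card V"
proof -
  have "\<not> orbit_rel V B \<subseteq> Id"
    using orbit_rel_step[OF assms(2-4)] assms(5) by auto
  then have "num_orbits V B \<noteq> card V"
    by (simp add: num_orbits_eq_card_iff[OF assms(1)])
  then show ?thesis
    using num_orbits_le[OF assms(1), of B] by simp
qed

section \<open>The distinguishing polynomial\<close>

lemma int_card_dist_labelings: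
  assumes "finite V"
  shows "int (card (dist_labelings V E k)) =
         (\<Sum>B\<in>Pow (graph_aut V E - {id}). (-1) ^ card B * int k ^ num_orbits V B)"
proof -
  have "dist_labelings V E k =
        {\<phi> \<in> labelings V k. \<forall>\<pi>\<in>graph_aut V E - {id}. \<not> preserves V \<pi> \<phi>}"
    by (auto simp: dist_labelings_def distinguishing_def)
  moreover have "card {\<phi> \<in> labelings V k. \<forall>\<pi>\<in>B. preserves V \<pi> \<phi>} = k ^ num_orbits V B"
    if "B \<in> Pow (graph_aut V E - {id})" for B
  proof (rule card_invariant_labelings[OF assms])
    show "\<pi> ` V \<subseteq> V" if "\<pi> \<in> B" for \<pi>
      using that \<open>B \<in> Pow (graph_aut V E - {id})\<close> graph_aut_image by blast
  qed
  ultimately show ?thesis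
    using assms by (simp add: int_card_sieve finite_graph_aut labelings_def finite_PiE)
qed

lemma D_asymmetric:
  assumes "finite V" "graph_aut V E = {id}"
  shows "D V E k = k ^ card V"
proof -
  have "int (D V E k) = int (card (dist_labelings V E k))"
    using card_dist_labelings_eq[OF assms(1)] assms(2) by simp
  also have "\<dots> = int (k ^ card V)"
    using assms by (simp add: int_card_dist_labelings num_orbits_empty)
  finally show ?thesis
    by (simp only: of_nat_eq_iff)
qed

lemma D_1_eq_0:
  assumes "graph_aut V E \<noteq> {id}"
  shows "D V E 1 = 0"
proof -
  obtain \<pi> where \<pi>: "\<pi> \<in> graph_aut V E" "\<pi> \<noteq> id"
    using assms id_in_graph_aut by blast
  have "preserves V \<pi> \<phi>" if "\<phi> \<in> labelings V 1" for \<phi>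
    using that graph_aut_image[OF \<pi>(1)] by (fastforce simp: labelings_def preserves_def)
  then have "dist_labelings V E 1 = {}"
    using \<pi> by (auto simp: dist_labelings_def distinguishing_def)
  then show ?thesis
    by (simp add: D_def)
qed

definition distinguishing_poly :: "'a set \<Rightarrow> ('a \<Rightarrow> 'a \<Rightarrow> bool) \<Rightarrow> rat poly" where
  "distinguishing_poly V E = smult (1 / of_nat (card (graph_aut V E)))
     (\<Sum>B\<in>Pow (graph_aut V E - {id}). monom ((-1) ^ card B) (num_orbits V B))"

lemma poly_distinguishing_poly:
  assumes "finite V"
  shows "poly (distinguishing_poly V E) (of_nat k) = of_nat (D V E k)"
proof -
  have "of_nat (card (graph_aut V E)) * (of_nat (D V E k) :: rat) =
        of_int (int (card (dist_labelings V E k)))"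
    by (simp add: card_dist_labelings_eq[OF assms])
  also have "\<dots> = (\<Sum>B\<in>Pow (graph_aut V E - {id}). (-1) ^ card B * of_nat k ^ num_orbits V B)"
    by (simp add: int_card_dist_labelings[OF assms])
  finally show ?thesis
    using card_graph_aut_pos[OF assms, of E]
    by (simp add: distinguishing_poly_def poly_sum poly_monom field_simps)
qed

lemma degree_distinguishing_poly:
  assumes "finite V" "V \<noteq> {}"
  shows "degree (distinguishing_poly V E) = card V"
proof -
  let ?A = "graph_aut V E - {id}"
  have "degree (\<Sum>B\<in>Pow ?A. monom ((-1) ^ card B :: rat) (num_orbits V B)) = num_orbits V {}"
  proof (rule degree_sum_monom_eq)
    show "finite (Pow ?A)"
      using finite_graph_aut[OF assms(1)] by simp
    show "num_orbits V B < num_orbits V {}" if B: "B \<in> Pow ?A" "B \<noteq> {}" for B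
    proof -
      obtain \<pi> where "\<pi> \<in> B" and \<pi>: "\<pi> \<in> graph_aut V E" "\<pi> \<noteq> id"
        using B by blast
      obtain w where "w \<in> V" "\<pi> w \<in> V" "\<pi> w \<noteq> w"
        by (rule graph_aut_moves_vertex[OF \<pi>])
      then show ?thesis
        using num_orbits_less[OF assms(1) \<open>\<pi> \<in> B\<close>] num_orbits_empty[OF assms(1)] by simp
    qed
  qed simp_all
  then show ?thesis
    using card_graph_aut_pos[OF assms(1), of E]
    by (simp add: distinguishing_poly_def num_orbits_empty[OF assms(1)])
qed

lemma coeff_0_distinguishing_poly:
  assumes "finite V" "V \<noteq> {}"
  shows "coeff (distinguishing_poly V E) 0 = 0"
proof -
  have "coeff (monom c (num_orbits V B)) 0 = 0" for c :: rat and B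
    using num_orbits_pos[OF assms, of B] by auto
  then show ?thesis
    by (simp add: distinguishing_poly_def coeff_sum)
qed

theorem theorem13:
  fixes V :: "'a set" and E :: "'a \<Rightarrow> 'a \<Rightarrow> bool"
  assumes "simple_graph V E" and "card V \<ge> 1"
  shows "\<exists>p :: rat poly.
           degree p = card V \<and> coeff p 0 = 0 \<and>
           (\<forall>k::nat. k \<ge> 1 \<longrightarrow> of_nat (D V E k) = poly p (of_nat k)) \<and>
           (graph_aut V E = {id} \<longrightarrow> (\<forall>k::nat. k \<ge> 1 \<longrightarrow> D V E k = k ^ card V)) \<and>
           (graph_aut V E \<noteq> {id} \<longrightarrow> (\<Sum>i\<le>degree p. coeff p i) = 0)"
proof -
  have fin: "finite V" and ne: "V \<noteq> {}"
    using assms by (auto simp: simple_graph_def)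
  let ?p = "distinguishing_poly V E"
  have coeff_sum_eq_0: "(\<Sum>i\<le>degree ?p. coeff ?p i) = 0" if "graph_aut V E \<noteq> {id}"
  proof -
    have "(\<Sum>i\<le>degree ?p. coeff ?p i) = poly ?p (of_nat 1)"
      by (simp add: poly_altdef)
    also have "\<dots> = 0"
      by (simp only: poly_distinguishing_poly[OF fin] D_1_eq_0[OF that] of_nat_0)
    finally show ?thesis .
  qed
  show ?thesis
    using degree_distinguishing_poly[OF fin ne] coeff_0_distinguishing_poly[OF fin ne]
      poly_distinguishing_poly[OF fin] D_asymmetric[OF fin] coeff_sum_eq_0
    by (intro exI[of _ ?p]) auto
qed

end
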